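(* Let $\mu>0$, $\tau>0$, and let $m,n$ be positive integers with $0<m<n$; put $\alpha=m/n$. Let $G_{m/n}(t)$, $t\ge 0$, denote the relaxation modulus of the Andrade model, i.e. the function whose Laplace transform is $$\tilde G_{m/n}(s)=\mathcal{L}[G_{m/n}(t);s]=\frac{\mu\,\tau}{s\,\tau+\Gamma\!\left(1+\tfrac{m}{n}\right)(s\,\tau)^{1-m/n}+1}.$$ Let $$p_{n,m}(r)=r^{n}+\Gamma\!\left(1+\tfrac{m}{n}\right)r^{n-m}+1,$$ and suppose $p_{n,m}$ has $n$ non-repeated (pairwise distinct) complex roots $r_1,\dots,r_n$. Then for $t\ge 0$ (with $t>0$ where the power $t^{1/n-1}$ is singular), $$G_{m/n}(t)=\mu\left(\frac{t}{\tau}\right)^{1/n-1}\sum_{k=1}^{n}\frac{\mathrm{E}_{\frac1n,\frac1n}\!\left(r_k\,(t/\tau)^{1/n}\right)}{p_{n,m}'(r_k)},$$ equivalently $$G_{m/n}(t)=\mu\sum_{k=1}^{n}\frac{\mathrm{R}_{1/n-1}\left(r_k,\,t/\tau\right)}{p_{n,m}'(r_k)}.$$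
   Context: The two-parameter Mittag--Leffler function is $\mathrm{E}_{a,b}(z)=\sum_{k=0}^{\infty}\frac{z^k}{\Gamma(b+a k)}$. The Rabotnov function is $\mathrm{R}_{\nu}(\lambda,t)=t^{\nu}\,\mathrm{E}_{\nu+1,\nu+1}(\lambda\,t^{\nu+1})$. Background: in the Andrade model of linear viscoelasticity the creep compliance is $J_\alpha(t)=\frac{1}{\mu}\left[1+(t/\tau)^\alpha+t/\tau\right]$, and the relaxation modulus $G_\alpha$ is determined by $\tilde J_\alpha(s)\tilde G_\alpha(s)=1/s^2$ (Laplace transforms), which gives the displayed $\tilde G$. *)

theory Defs
  imports "HOL-Analysis.Analysis" "HOL-Computational_Algebra.Polynomial"
begin

definition mittag_leffler :: "real \<Rightarrow> real \<Rightarrow> complex \<Rightarrow> complex" where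
  "mittag_leffler a b z = (\<Sum>k. z ^ k / complex_of_real (Gamma (b + a * real k)))"

definition rabotnov :: "real \<Rightarrow> complex \<Rightarrow> real \<Rightarrow> complex" where
  "rabotnov \<nu> lam t = complex_of_real (t powr \<nu>) *
      mittag_leffler (\<nu> + 1) (\<nu> + 1) (lam * complex_of_real (t powr (\<nu> + 1)))"

definition p_nm :: "nat \<Rightarrow> nat \<Rightarrow> complex poly" where
  "p_nm n m = monom 1 n + monom (complex_of_real (Gamma (1 + real m / real n))) (n - m) + 1"

end

(*
  Put beta = 1/n and w = (s tau) powr beta.  Integrating the Mittag-Leffler series termwise,
  the Laplace transform of t |-> R_{beta-1}(r, t/tau) is tau / (w - r) whenever |r| < w.
  Since w^n = s tau and w^(n-m) = (s tau) powr (1 - m/n), the prescribed transform of G is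
  mu tau / p_{n,m}(w), and the partial fraction expansion
  1 / p(w) = sum_k 1 / (p'(r_k) (w - r_k)) over the simple roots shows that the claimed
  formula has the same Laplace transform as G for all large s.  By Lerch's theorem a
  continuous function whose Laplace transform vanishes for all large s is zero.  It is proved
  by passing to the primitive, which is bounded, substituting x = exp (-t) and applying the
  Weierstrass approximation theorem: a continuous function on [0, 1] orthogonal to all
  monomials vanishes.
*)

theory Submission
  imports Defs
begin

section \<open>Partial fractions over simple roots\<close>

lemma linear_factor_at_root:
  fixes p :: "'a::field poly"
  assumes "poly p x = 0"
  shows "p = [:-x, 1:] * (p div [:-x, 1:])"
proof -
  have "[:-x, 1:] dvd p" using assms by (simp add: dvd_iff_poly_eq_0)
  then show ?thesis by (rule dvd_mult_div_cancel[symmetric])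
qed

lemma poly_eq_times_div_linear:
  fixes p :: "'a::field poly"
  assumes "poly p x = 0"
  shows "poly p y = (y - x) * poly (p div [:-x, 1:]) y"
  by (subst linear_factor_at_root[OF assms]) (simp add: algebra_simps)

lemma poly_pderiv_at_root:
  fixes p :: "'a::field poly"
  assumes "poly p x = 0"
  shows "poly (pderiv p) x = poly (p div [:-x, 1:]) x"
proof -
  have "pderiv p = [:-x, 1:] * pderiv (p div [:-x, 1:]) + (p div [:-x, 1:]) * pderiv [:-x, 1:]"
    by (subst linear_factor_at_root[OF assms]) (rule pderiv_mult)
  then show ?thesis by (simp add: pderiv_pCons)
qed

lemma lagrange_basis_simple_roots_sum:
  fixes p :: "'a::field poly"
  assumes card: "card R = degree p" and deg: "degree p > 0"
    and roots: "\<And>x. x \<in> R \<Longrightarrow> poly p x = 0"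
  shows "(\<Sum>x\<in>R. smult (1 / poly (pderiv p) x) (p div [:-x, 1:])) = 1"
proof -
  define q where "q x = p div [:-x, 1:]" for x
  have fin: "finite R" using card deg by (simp add: card_ge_0_finite)
  have degq: "degree (q x) < card R" for x
    using degree_div_less[of p "[:-x, 1:]"] deg card by (simp add: q_def)
  have qroot: "poly (q x) y = 0" if "x \<in> R" "y \<in> R" "y \<noteq> x" for x y
    using poly_eq_times_div_linear[OF roots[OF that(1)], of y] roots[OF that(2)] that(3) by (simp add: q_def)
  have qx: "poly (q x) x \<noteq> 0" if "x \<in> R" for x
  proof
    assume "poly (q x) x = 0"
    then have "q x = 0"
      using qroot[OF that] degq[of x] by (intro poly_eqI_degree[of R]) auto
    then show False using linear_factor_at_root[OF roots[OF that]] deg by (simp add: q_def)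
  qed
  show ?thesis
  proof (rule poly_eqI_degree[of R])
    show "poly (\<Sum>x\<in>R. smult (1 / poly (pderiv p) x) (p div [:-x, 1:])) y = poly 1 y" if "y \<in> R" for y
    proof -
      have "poly (\<Sum>x\<in>R. smult (1 / poly (pderiv p) x) (p div [:-x, 1:])) y = (\<Sum>x\<in>R. if x = y then 1 else 0)"
        unfolding poly_sum
        by (intro sum.cong) (use that qroot qx roots in \<open>auto simp: poly_pderiv_at_root q_def\<close>)
      then show ?thesis using fin that by simp
    qed
    show "degree (\<Sum>x\<in>R. smult (1 / poly (pderiv p) x) (p div [:-x, 1:])) < card R"
      using deg card degq unfolding q_def
      by (intro degree_sum_less) (auto intro: le_less_trans[OF degree_smult_le])
  qed (use deg card in simp)
qed

lemma partial_fractions_simple_roots: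
  fixes p :: "'a::field poly"
  assumes card: "card R = degree p" and deg: "degree p > 0"
    and roots: "\<And>x. x \<in> R \<Longrightarrow> poly p x = 0" and w: "w \<notin> R"
  shows "(\<Sum>x\<in>R. 1 / (poly (pderiv p) x * (w - x))) = 1 / poly p w"
proof -
  have fin: "finite R" and p0: "p \<noteq> 0" using card deg by (auto intro: card_ge_0_finite)
  have p_w: "poly p w \<noteq> 0"
  proof
    assume "poly p w = 0"
    then have "card (insert w R) \<le> card {y. poly p y = 0}"
      using roots by (intro card_mono[OF poly_roots_finite[OF p0]]) auto
    also have "\<dots> \<le> degree p" by (rule card_poly_roots_bound[OF p0])
    finally show False using w fin card by simp
  qed
  have "1 = poly (\<Sum>x\<in>R. smult (1 / poly (pderiv p) x) (p div [:-x, 1:])) w"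
    by (simp add: lagrange_basis_simple_roots_sum[OF card deg roots])
  also have "\<dots> = (\<Sum>x\<in>R. poly p w / (poly (pderiv p) x * (w - x)))"
    unfolding poly_sum
  proof (rule sum.cong[OF refl])
    fix x assume x: "x \<in> R"
    have "w - x \<noteq> 0" using w x by auto
    then show "poly (smult (1 / poly (pderiv p) x) (p div [:-x, 1:])) w = poly p w / (poly (pderiv p) x * (w - x))"
      unfolding poly_eq_times_div_linear[OF roots[OF x], of w]
      by (simp add: mult.commute[of "poly (pderiv p) x"])
  qed
  finally have "poly p w * (\<Sum>x\<in>R. 1 / (poly (pderiv p) x * (w - x))) = 1"
    by (simp add: sum_distrib_left)
  with p_w show ?thesis by (simp add: eq_divide_eq mult.commute)
qed

section \<open>Convergence of the Mittag-Leffler series\<close>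

lemma power_div_fact_le_exp:
  fixes x :: real
  assumes "x \<ge> 0"
  shows "x ^ k / fact k \<le> exp x"
proof -
  have exp_sums: "(\<lambda>n. x ^ n / fact n) sums exp x"
    using exp_converges[of x] by (simp add: divide_inverse mult.commute)
  show ?thesis
    using sum_le_suminf[OF sums_summable[OF exp_sums], of "{k}"] sums_unique[OF exp_sums] assms by simp
qed

lemma fact_floor_le_Gamma:
  fixes x :: real
  assumes "x \<ge> 2"
  shows "fact (nat (\<lfloor>x\<rfloor> - 1)) \<le> Gamma x"
proof -
  have "fact (nat (\<lfloor>x\<rfloor> - 1)) = Gamma (of_int \<lfloor>x\<rfloor> :: real)"
    using assms by (simp add: Gamma_of_int)
  also have "\<dots> \<le> Gamma x"
  proof (cases "real_of_int \<lfloor>x\<rfloor> < x")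
    case True
    have "2 \<le> \<lfloor>x\<rfloor>" using assms by (simp add: le_floor_iff)
    then have "3 / 2 \<le> real_of_int \<lfloor>x\<rfloor>" by linarith
    then show ?thesis using True by (rule less_imp_le[OF Gamma_real_strict_mono])
  next
    case False
    then have "real_of_int \<lfloor>x\<rfloor> = x" using of_int_floor_le[of x] by linarith
    then show ?thesis by (simp only: order.refl)
  qed
  finally show ?thesis .
qed

lemma Gamma_ge_powr:
  fixes x A :: real
  assumes x: "x \<ge> 2" and A: "A \<ge> 1"
  shows "A powr (x - 2) \<le> exp A * Gamma x"
proof -
  define k where "k = nat (\<lfloor>x\<rfloor> - 1)"
  have "x - 2 \<le> real k" unfolding k_def using x by linarith
  then have "A powr (x - 2) \<le> A ^ k"
    using A by (simp add: powr_realpow[symmetric] powr_mono)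
  also have "\<dots> \<le> exp A * fact k"
    using power_div_fact_le_exp[of A k] A by (simp add: divide_le_eq mult.commute)
  also have "\<dots> \<le> exp A * Gamma x"
    unfolding k_def using x by (intro mult_left_mono fact_floor_le_Gamma) auto
  finally show ?thesis .
qed

lemma summable_norm_mittag_leffler:
  fixes a b :: real and z :: complex
  assumes a: "a > 0"
  shows "summable (\<lambda>k. norm (z ^ k / of_real (Gamma (b + a * real k))))"
proof -
  define R where "R = max 1 (norm z)"
  \<comment> \<open>With A powr a = 2 R, Gamma_ge_powr makes Gamma (b + a k) outgrow (2 R)^k.\<close>
  define A where "A = (2 * R) powr (1 / a)"
  define C where "C = exp A / A powr (b - 2)"
  have R1: "R \<ge> 1" unfolding R_def by simp
  have A1: "A \<ge> 1" unfolding A_def using R1 a by (intro ge_one_powr_ge_zero) auto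
  have A_powr_a: "A powr a = 2 * R" unfolding A_def using R1 a by (simp add: powr_powr)
  show ?thesis
  proof (rule summable_comparison_test'[where g = "\<lambda>k. C * (1 / 2) ^ k" and N = "nat \<lceil>(2 - b) / a\<rceil>"])
    show "summable (\<lambda>k. C * (1 / 2) ^ k)" by (intro summable_mult summable_geometric) simp
  next
    fix k assume "nat \<lceil>(2 - b) / a\<rceil> \<le> k"
    then have "(2 - b) / a \<le> real k" by linarith
    then have x2: "b + a * real k \<ge> 2" using a by (simp add: field_simps)
    have Gamma_pos: "Gamma (b + a * real k) > 0" using x2 by (intro Gamma_real_pos) simp
    have "A powr (a * real k) = (A powr a) powr real k" by (simp add: powr_powr)
    also have "\<dots> = (2 * R) ^ k" using R1 by (simp add: A_powr_a powr_realpow)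
    moreover have "A powr (b + a * real k - 2) = A powr (b - 2) * A powr (a * real k)"
      by (subst powr_add[symmetric]) (simp add: algebra_simps)
    ultimately have lower: "A powr (b - 2) * (2 * R) ^ k \<le> exp A * Gamma (b + a * real k)"
      using Gamma_ge_powr[OF x2 A1] by simp
    have "norm (z ^ k / of_real (Gamma (b + a * real k))) \<le> R ^ k / Gamma (b + a * real k)"
      using Gamma_pos by (simp add: norm_divide norm_power R_def divide_right_mono power_mono)
    also have "\<dots> \<le> R ^ k * (exp A / (A powr (b - 2) * (2 * R) ^ k))"
      using lower Gamma_pos A1 R1 by (simp add: divide_simps mult_ac)
    also have "\<dots> = C * (1 / 2) ^ k"
      using R1 by (simp add: C_def field_simps)
    finally show "norm (norm (z ^ k / of_real (Gamma (b + a * real k)))) \<le> C * (1 / 2) ^ k" by simp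
  qed
qed

lemma mittag_leffler_sums:
  assumes "a > 0"
  shows "(\<lambda>k. z ^ k / of_real (Gamma (b + a * real k))) sums mittag_leffler a b z"
  unfolding mittag_leffler_def
  by (rule summable_sums[OF summable_norm_cancel[OF summable_norm_mittag_leffler[OF assms]]])

lemma isCont_mittag_leffler:
  assumes "a > 0"
  shows "isCont (mittag_leffler a b) z"
proof -
  have ml: "mittag_leffler a b = (\<lambda>z. \<Sum>k. (1 / of_real (Gamma (b + a * real k))) * z ^ k)"
    unfolding mittag_leffler_def by (simp add: field_simps)
  have "summable (\<lambda>k. (1 / of_real (Gamma (b + a * real k))) * of_real (norm z + 1) ^ k :: complex)"
    using summable_norm_cancel[OF summable_norm_mittag_leffler[OF assms, of "of_real (norm z + 1)" b]]
    by (simp add: divide_inverse mult.commute)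
  then show ?thesis unfolding ml by (rule isCont_powser) simp
qed

section \<open>The Laplace transform of the Rabotnov function\<close>

lemma has_integral_Ioi_iff_Ici:
  fixes f :: "real \<Rightarrow> 'a::banach"
  shows "(f has_integral i) {a<..} \<longleftrightarrow> (f has_integral i) {a..}"
  by (rule has_integral_spike_set_eq; rule negligible_subset[OF negligible_sing[of a]]) auto

lemma has_integral_laplace_powr:
  fixes a s \<tau> :: real
  assumes a: "a > 0" and s: "s > 0" and \<tau>: "\<tau> > 0"
  shows "((\<lambda>t. exp (- s * t) * (t / \<tau>) powr (a - 1)) has_integral \<tau> * Gamma a / (s * \<tau>) powr a) {0<..}"
proof -
  define f where "f u = u powr (a - 1) / exp u" for u :: real
  have f_int: "(f has_integral Gamma a) {0..}" unfolding f_def by (rule Gamma_integral_real[OF a])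
  have "f absolutely_integrable_on {0..}"
    using f_int by (intro nonnegative_absolutely_integrable_1) (auto simp: f_def)
  moreover have "(\<lambda>x. s * x) ` {0..} = {0..}"
    using s by (auto simp: image_iff intro!: bexI[where x = "_ / s"])
  ultimately have "(\<lambda>x. \<bar>s\<bar> * f (s * x)) absolutely_integrable_on {0..} \<and>
      integral {0..} (\<lambda>x. \<bar>s\<bar> * f (s * x)) = Gamma a"
    using f_int s
    by (subst has_absolute_integral_change_of_variables_1'[where g' = "\<lambda>_. s"])
       (auto intro!: derivative_eq_intros simp: inj_on_def has_integral_iff)
  then have "((\<lambda>x. \<bar>s\<bar> * f (s * x)) has_integral Gamma a) {0..}"
    by (simp add: absolutely_integrable_on_def has_integral_iff)
  then have scaled: "((\<lambda>x. (s * \<tau>) powr (1 - a) / s * (\<bar>s\<bar> * f (s * x))) has_integral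
      (s * \<tau>) powr (1 - a) / s * Gamma a) {0..}"
    by (rule has_integral_mult_right)
  have eq: "(s * \<tau>) powr (1 - a) / s * (\<bar>s\<bar> * f (s * x)) = exp (- s * x) * (x / \<tau>) powr (a - 1)"
    if "x \<in> {0..}" for x
    using that s \<tau> by (simp add: f_def powr_mult powr_divide powr_diff exp_minus field_simps)
  have val: "(s * \<tau>) powr (1 - a) / s * Gamma a = \<tau> * Gamma a / (s * \<tau>) powr a"
    using s \<tau> by (simp add: powr_diff field_simps)
  show ?thesis
    unfolding has_integral_Ioi_iff_Ici using has_integral_eq[OF eq scaled] val by simp
qed

lemma has_integral_suminf:
  fixes f :: "nat \<Rightarrow> 'n::euclidean_space \<Rightarrow> 'm::euclidean_space"
  assumes f: "\<And>j. (f j has_integral I j) S"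
    and norm_f: "\<And>j. ((\<lambda>x. norm (f j x)) has_integral N j) S"
    and N: "summable N"
    and pointwise: "\<And>x. x \<in> S \<Longrightarrow> summable (\<lambda>j. norm (f j x))"
  shows "((\<lambda>x. \<Sum>j. f j x) has_integral (\<Sum>j. I j)) S"
proof -
  define h where "h x = (\<Sum>j. norm (f j x))" for x
  have N_nonneg: "N j \<ge> 0" for j by (rule has_integral_nonneg[OF norm_f]) simp
  have norm_I: "norm (I j) \<le> N j" for j
    using integral_norm_bound_integral[of "f j" S "\<lambda>x. norm (f j x)"] f[of j] norm_f[of j]
    by (auto simp: has_integral_iff)
  have partial: "((\<lambda>x. \<Sum>j<k. norm (f j x)) has_integral (\<Sum>j<k. N j)) S" for k
    by (intro has_integral_sum norm_f) simp
  have "h integrable_on S \<and> ((\<lambda>k. integral S (\<lambda>x. \<Sum>j<k. norm (f j x))) \<longlongrightarrow> integral S h) sequentially"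
  proof (rule monotone_convergence_increasing)
    show "(\<lambda>x. \<Sum>j<k. norm (f j x)) integrable_on S" for k
      using partial by blast
    show "((\<lambda>k. \<Sum>j<k. norm (f j x)) \<longlonglongrightarrow> h x)" if "x \<in> S" for x
      unfolding h_def using pointwise[OF that] by (rule summable_LIMSEQ)
    have "integral S (\<lambda>x. \<Sum>j<k. norm (f j x)) = (\<Sum>j<k. N j)" for k
      using partial by (rule integral_unique)
    moreover have "(\<Sum>j<k. N j) \<le> suminf N" for k
      using N N_nonneg by (intro sum_le_suminf) auto
    ultimately show "bounded (range (\<lambda>k. integral S (\<lambda>x. \<Sum>j<k. norm (f j x))))"
      unfolding bounded_real by (intro exI[of _ "suminf N"]) (simp add: sum_nonneg N_nonneg)
  qed simp
  then have h_int: "h integrable_on S" ..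
  have I: "summable I"
    by (rule summable_norm_cancel, rule summable_comparison_test'[OF N]) (simp add: norm_I)
  show ?thesis
  proof (rule has_integral_dominated_convergence[where f = "\<lambda>k x. \<Sum>j<k. f j x" and h = h])
    show "((\<lambda>x. \<Sum>j<k. f j x) has_integral (\<Sum>j<k. I j)) S" for k
      by (intro has_integral_sum f) simp
    show "\<forall>x\<in>S. norm (\<Sum>j<k. f j x) \<le> h x" for k
    proof
      fix x assume "x \<in> S"
      have "norm (\<Sum>j<k. f j x) \<le> (\<Sum>j<k. norm (f j x))" by (rule norm_sum)
      also have "\<dots> \<le> h x" unfolding h_def by (rule sum_le_suminf[OF pointwise[OF \<open>x \<in> S\<close>]]) auto
      finally show "norm (\<Sum>j<k. f j x) \<le> h x" .
    qed
    show "\<forall>x\<in>S. (\<lambda>k. \<Sum>j<k. f j x) \<longlonglongrightarrow> (\<Sum>j. f j x)"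
      using pointwise by (auto intro: summable_LIMSEQ summable_norm_cancel)
  qed (use h_int I in \<open>simp_all add: summable_LIMSEQ\<close>)
qed

lemma geometric_sums_div:
  fixes c r w :: "'a::real_normed_field"
  assumes "norm r < norm w"
  shows "(\<lambda>j. c * r ^ j / w ^ (j + 1)) sums (c / (w - r))"
proof -
  have w: "w \<noteq> 0" and "w - r \<noteq> 0" using assms by auto
  have "norm (r / w) < 1" using assms w by (simp add: norm_divide divide_less_eq)
  from sums_mult[OF geometric_sums[OF this], of "c / w"]
  show ?thesis using w \<open>w - r \<noteq> 0\<close> by (simp add: field_simps)
qed

lemma rabotnov_sums:
  fixes \<beta> x :: real and r :: complex
  assumes \<beta>: "\<beta> > 0" and x: "x > 0"
  shows "(\<lambda>j. r ^ j / of_real (Gamma (\<beta> + \<beta> * real j)) * of_real (x powr (\<beta> + \<beta> * real j - 1)))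
           sums rabotnov (\<beta> - 1) r x"
    and "summable (\<lambda>j. norm (r ^ j / of_real (Gamma (\<beta> + \<beta> * real j)) * of_real (x powr (\<beta> + \<beta> * real j - 1))))"
proof -
  define c :: complex where "c = of_real (x powr (\<beta> - 1))"
  define z where "z = r * of_real (x powr \<beta>)"
  have "(x powr \<beta>) ^ j * x powr (\<beta> - 1) = x powr (\<beta> + \<beta> * real j - 1)" for j
    using x by (simp add: powr_realpow[symmetric] powr_powr powr_add[symmetric] algebra_simps)
  then have a_eq: "r ^ j / of_real (Gamma (\<beta> + \<beta> * real j)) * of_real (x powr (\<beta> + \<beta> * real j - 1))
      = c * (z ^ j / of_real (Gamma (\<beta> + \<beta> * real j)))" for j
    by (simp add: c_def z_def field_simps flip: of_real_power of_real_mult)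
  show "(\<lambda>j. r ^ j / of_real (Gamma (\<beta> + \<beta> * real j)) * of_real (x powr (\<beta> + \<beta> * real j - 1)))
      sums rabotnov (\<beta> - 1) r x"
    unfolding a_eq rabotnov_def using sums_mult[OF mittag_leffler_sums[OF \<beta>, of z \<beta>], of c]
    by (simp add: c_def z_def)
  show "summable (\<lambda>j. norm (r ^ j / of_real (Gamma (\<beta> + \<beta> * real j)) * of_real (x powr (\<beta> + \<beta> * real j - 1))))"
    using summable_mult[OF summable_norm_mittag_leffler[OF \<beta>, of z \<beta>], of "norm c"]
    by (simp only: a_eq norm_mult)
qed

lemma has_integral_laplace_rabotnov:
  fixes \<beta> \<tau> s :: real and r :: complex
  assumes \<beta>: "\<beta> > 0" and \<tau>: "\<tau> > 0" and s: "s > 0" and r: "norm r < (s * \<tau>) powr \<beta>"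
  shows "((\<lambda>t. of_real (exp (- s * t)) * rabotnov (\<beta> - 1) r (t / \<tau>)) has_integral
           of_real \<tau> / (of_real ((s * \<tau>) powr \<beta>) - r)) {0<..}"
proof -
  \<comment> \<open>The j-th term of the series has transform tau r^j / w^(j+1), the Gamma factors cancel;
    the norms give the same geometric series with norm r in place of r, so termwise integration is legitimate.\<close>
  define w where "w = (s * \<tau>) powr \<beta>"
  define \<Gamma> where "\<Gamma> j = Gamma (\<beta> + \<beta> * real j)" for j
  define e where "e j = (\<lambda>t. exp (- s * t) * (t / \<tau>) powr (\<beta> + \<beta> * real j - 1))" for j
  define f where "f j = (\<lambda>t. r ^ j / of_real (\<Gamma> j) * of_real (e j t))" for j
  have w: "w > 0" unfolding w_def using s \<tau> by simp
  have \<Gamma>_pos: "\<Gamma> j > 0" for j unfolding \<Gamma>_def using \<beta> by (intro Gamma_real_pos) (simp add: add_pos_nonneg)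
  have e_int: "(e j has_integral \<tau> * \<Gamma> j / w ^ (j + 1)) {0<..}" for j
  proof -
    have "(s * \<tau>) powr (\<beta> + \<beta> * real j) = w ^ (j + 1)"
      using s \<tau> by (simp add: w_def powr_realpow[symmetric] powr_powr powr_add algebra_simps)
    then show ?thesis
      using has_integral_laplace_powr[OF _ s \<tau>, of "\<beta> + \<beta> * real j"] \<beta>
      by (simp add: e_def \<Gamma>_def add_pos_nonneg)
  qed
  have f_int: "(f j has_integral of_real \<tau> * r ^ j / of_real w ^ (j + 1)) {0<..}" for j
    using has_integral_mult_right[OF has_integral_of_real[OF e_int[of j]], of "r ^ j / of_real (\<Gamma> j)"] \<Gamma>_pos[of j]
    by (simp add: f_def field_simps)
  have norm_f_int: "((\<lambda>t. norm (f j t)) has_integral \<tau> * norm r ^ j / w ^ (j + 1)) {0<..}" for j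
    using has_integral_mult_right[OF e_int[of j], of "norm r ^ j / \<Gamma> j"] \<Gamma>_pos[of j]
    by (simp add: f_def e_def norm_mult norm_divide norm_power field_simps)
  have f_eq: "f j t = of_real (exp (- s * t)) *
      (r ^ j / of_real (\<Gamma> j) * of_real ((t / \<tau>) powr (\<beta> + \<beta> * real j - 1)))" for j t
    by (simp add: f_def e_def)
  have series: "(\<lambda>j. f j t) sums (of_real (exp (- s * t)) * rabotnov (\<beta> - 1) r (t / \<tau>))"
    if "t > 0" for t
    unfolding f_eq \<Gamma>_def by (rule sums_mult[OF rabotnov_sums(1)[OF \<beta> divide_pos_pos[OF that \<tau>]]])
  have series_norm: "summable (\<lambda>j. norm (f j t))" if "t > 0" for t
    unfolding f_eq \<Gamma>_def norm_mult[of "of_real (exp (- s * t))"] by (rule summable_mult[OF rabotnov_sums(2)[OF \<beta> divide_pos_pos[OF that \<tau>]]])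
  have "norm (norm r) < norm w" using r w by (simp add: w_def)
  from sums_summable[OF geometric_sums_div[OF this, of \<tau>]]
  have "((\<lambda>t. \<Sum>j. f j t) has_integral (\<Sum>j. of_real \<tau> * r ^ j / of_real w ^ (j + 1))) {0<..}"
    by (intro has_integral_suminf[OF f_int norm_f_int]) (use series_norm in auto)
  moreover have "(\<lambda>j. of_real \<tau> * r ^ j / of_real w ^ (j + 1)) sums (of_real \<tau> / (of_real w - r))"
    using r w by (intro geometric_sums_div) (simp add: w_def)
  ultimately have "((\<lambda>t. \<Sum>j. f j t) has_integral of_real \<tau> / (of_real w - r)) {0<..}"
    by (simp add: sums_iff)
  then show ?thesis
    unfolding w_def by (rule has_integral_eq[rotated]) (use series in \<open>auto simp: sums_iff\<close>)
qed

section \<open>Lerch's uniqueness theorem\<close>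

lemma tendsto_integral_Icc_at_top:
  fixes f :: "real \<Rightarrow> 'a::banach"
  assumes f: "(f has_integral i) {0..}"
  shows "((\<lambda>T. integral {0..T} f) \<longlongrightarrow> i) at_top"
proof (rule tendstoI)
  fix e :: real assume e: "e > 0"
  have "{0::real..} \<noteq> cbox a b" for a b
  proof
    assume "{0::real..} = cbox a b"
    moreover have "max b 0 + 1 \<in> {0::real..}" by simp
    ultimately show False by auto
  qed
  then obtain B where B: "B > 0" "\<And>a b. ball 0 B \<subseteq> cbox a b \<Longrightarrow>
      \<exists>z. ((\<lambda>x. if x \<in> {0..} then f x else 0) has_integral z) (cbox a b) \<and> norm (z - i) < e"
    using has_integral_altD[OF f _ e] by blast
  show "\<forall>\<^sub>F T in at_top. dist (integral {0..T} f) i < e"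
    unfolding eventually_at_top_linorder
  proof (intro exI allI impI)
    fix T assume T: "T \<ge> B"
    have "ball 0 B \<subseteq> cbox (-T) T" using T by (auto simp: dist_real_def)
    then obtain z where z: "((\<lambda>x. if x \<in> {0..} then f x else 0) has_integral z) (cbox (-T) T)"
        "norm (z - i) < e"
      using B(2) by blast
    have "z = integral {-T..T} (\<lambda>x. if x \<in> {0..} then f x else 0)"
      using z(1) by (simp add: integral_unique)
    also have "\<dots> = integral ({0..} \<inter> {-T..T}) f" by (rule integral_restrict_Int)
    also have "{0..} \<inter> {-T..T} = {0..T}" using T B by auto
    finally show "dist (integral {0..T} f) i < e" using z(2) by (simp add: dist_norm)
  qed
qed

lemma bounded_Ici_if_tendsto_at_top:
  fixes H :: "real \<Rightarrow> real"
  assumes cont: "continuous_on {0..} H" and lim: "(H \<longlongrightarrow> c) at_top"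
  obtains B where "\<And>t. t \<ge> 0 \<Longrightarrow> \<bar>H t\<bar> \<le> B"
proof -
  obtain T where T: "\<And>t. t \<ge> T \<Longrightarrow> dist (H t) c < 1"
    using tendstoD[OF lim zero_less_one] unfolding eventually_at_top_linorder by blast
  have "bounded (H ` {0..T})"
    by (rule compact_imp_bounded[OF compact_continuous_image[OF continuous_on_subset[OF cont]]]) auto
  then obtain B where B: "\<forall>y\<in>H ` {0..T}. \<bar>y\<bar> \<le> B" unfolding bounded_real by blast
  have "\<bar>H t\<bar> \<le> max B (\<bar>c\<bar> + 1)" if "t \<ge> 0" for t
  proof (cases "t \<le> T")
    case True
    then show ?thesis using B that by (metis atLeastAtMost_iff image_eqI max.coboundedI1)
  next
    case False
    then show ?thesis using T[of t] by (simp add: dist_real_def)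
  qed
  then show ?thesis by (rule that)
qed

lemma continuous_on_primitive_Ici:
  fixes k :: "real \<Rightarrow> 'a::banach"
  assumes "\<And>T. k integrable_on {0..T}"
  shows "continuous_on {0..} (\<lambda>T. integral {0..T} k)"
  unfolding continuous_on_eq_continuous_within
proof
  fix x :: real assume "x \<in> {0..}"
  then have "continuous (at x within {0..x+1}) (\<lambda>T. integral {0..T} k)"
    using indefinite_integral_continuous_1[OF assms] by (simp add: continuous_on_eq_continuous_within)
  moreover have "at x within {0..} = at x within {0..x+1}"
    by (rule at_within_nhd[of x "{x-1<..<x+1}"]) auto
  ultimately show "continuous (at x within {0..}) (\<lambda>T. integral {0..T} k)" by simp
qed

lemma primitive_has_vector_derivative:
  fixes k :: "real \<Rightarrow> 'a::banach"
  assumes "k integrable_on {0..T}" and "isCont k x" and "0 < x" "x < T"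
  shows "((\<lambda>t. integral {0..t} k) has_vector_derivative k x) (at x)"
proof -
  have "((\<lambda>t. integral {0..t} k) has_vector_derivative k x) (at x within {0..T} - {})"
    by (rule integral_has_vector_derivative_continuous_at)
       (use assms in \<open>auto intro: continuous_at_imp_continuous_within\<close>)
  moreover have "at x within ({0..T} - {}) = at x"
    by (rule at_within_interior) (use assms in simp)
  ultimately show ?thesis by simp
qed

lemma has_integral_exp_mult_primitive:
  fixes k :: "real \<Rightarrow> real"
  assumes k: "k integrable_on {0..T}" and cont: "continuous_on {0<..} k"
    and ku: "((\<lambda>t. exp (- u * t) * k t) has_integral L) {0..T}" and u: "u > 0" and T: "T \<ge> 0"
  shows "((\<lambda>t. exp (- u * t) * integral {0..t} k) has_integral
           (L - exp (- u * T) * integral {0..T} k) / u) {0..T}"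
proof (rule integration_by_parts_interior_strong[OF bounded_bilinear_mult, of "{}" 0 T
      "\<lambda>t. - exp (- u * t) / u" "\<lambda>t. integral {0..t} k" "\<lambda>t. exp (- u * t)" k])
  show "continuous_on {0..T} (\<lambda>t. - exp (- u * t) / u)" using u by (intro continuous_intros) auto
  show "continuous_on {0..T} (\<lambda>t. integral {0..t} k)" by (rule indefinite_integral_continuous_1[OF k])
  fix x assume x: "x \<in> {0<..<T} - {}"
  show "((\<lambda>t. - exp (- u * t) / u) has_vector_derivative exp (- u * x)) (at x)"
    using u by (auto intro!: derivative_eq_intros simp flip: has_real_derivative_iff_has_vector_derivative)
  show "((\<lambda>t. integral {0..t} k) has_vector_derivative k x) (at x)"
    using x cont by (intro primitive_has_vector_derivative[OF k]) (auto simp: continuous_on_eq_continuous_at)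
next
  have "((\<lambda>t. - 1 / u * (exp (- u * t) * k t)) has_integral - 1 / u * L) {0..T}"
    by (rule has_integral_mult_right[OF ku])
  then show "((\<lambda>t. - exp (- u * t) / u * k t) has_integral
      - exp (- u * T) / u * integral {0..T} k - - exp (- u * 0) / u * integral {0..0} k
      - (L - exp (- u * T) * integral {0..T} k) / u) {0..T}"
    using u by (simp add: field_simps)
qed (use T in simp_all)

lemma tendsto_laplace_primitive:
  fixes k :: "real \<Rightarrow> real"
  assumes k: "(k has_integral K) {0..}" and cont: "continuous_on {0<..} k"
    and ku: "((\<lambda>t. exp (- u * t) * k t) has_integral L) {0..}" and u: "u > 0"
  shows "((\<lambda>T. integral {0..T} (\<lambda>t. exp (- u * t) * integral {0..t} k)) \<longlongrightarrow> L / u) at_top"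
proof -
  have sub: "f integrable_on {0..T}" if "(f has_integral I) {0..}" for f :: "real \<Rightarrow> real" and I T
    using that by (intro integrable_on_subinterval[of _ "{0..}"]) (auto simp: integrable_on_def)
  have exp_lim: "((\<lambda>T. exp (- u * T)) \<longlongrightarrow> 0) at_top"
    using u by (intro filterlim_compose[OF exp_at_bot]
        filterlim_tendsto_neg_mult_at_bot[OF tendsto_const _ filterlim_ident]) simp
  have "((\<lambda>T. (integral {0..T} (\<lambda>t. exp (- u * t) * k t) - exp (- u * T) * integral {0..T} k) / u)
      \<longlongrightarrow> (L - 0 * K) / u) at_top"
    using u by (intro tendsto_intros tendsto_integral_Icc_at_top k ku exp_lim) simp
  then have lim: "((\<lambda>T. (integral {0..T} (\<lambda>t. exp (- u * t) * k t) - exp (- u * T) * integral {0..T} k) / u)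
      \<longlongrightarrow> L / u) at_top" by simp
  have eq: "integral {0..T} (\<lambda>t. exp (- u * t) * integral {0..t} k) =
      (integral {0..T} (\<lambda>t. exp (- u * t) * k t) - exp (- u * T) * integral {0..T} k) / u" if "T \<ge> 0" for T
    using has_integral_exp_mult_primitive[OF sub[OF k] cont integrable_integral[OF sub[OF ku]] u that]
    by (rule integral_unique)
  show ?thesis
    by (rule Lim_transform_eventually[OF lim]) (use eq in \<open>auto intro: eventually_mono[OF eventually_ge_at_top[of 0]]\<close>)
qed

lemma continuous_on_exp_substitution:
  fixes H :: "real \<Rightarrow> real"
  assumes cont: "continuous_on {0..} H" and bnd: "\<And>t. t \<ge> 0 \<Longrightarrow> \<bar>H t\<bar> \<le> B"
  shows "continuous_on {0..1} (\<lambda>x. if x \<le> 0 then 0 else x * H (- ln x))"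
    (is "continuous_on _ ?\<phi>")
  unfolding continuous_on_eq_continuous_within
proof
  fix x :: real assume x: "x \<in> {0..1}"
  show "continuous (at x within {0..1}) ?\<phi>"
  proof (cases "x = 0")
    case True
    have bound: "norm (?\<phi> y) \<le> B * \<bar>y\<bar>" if "y \<in> {0..1}" for y
    proof (cases "y \<le> 0")
      case True
      then show ?thesis using bnd[of 0] that by simp
    next
      case False
      then have "\<bar>H (- ln y)\<bar> \<le> B" using that by (intro bnd) simp
      then show ?thesis using False by (simp add: abs_mult mult.commute mult_left_mono)
    qed
    have "(?\<phi> \<longlongrightarrow> 0) (at 0 within {0..1})"
    proof (rule Lim_null_comparison)
      show "\<forall>\<^sub>F y in at 0 within {0..1}. norm (?\<phi> y) \<le> B * \<bar>y\<bar>"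
        unfolding eventually_at_filter by (rule always_eventually) (blast intro: bound)
      show "((\<lambda>y. B * \<bar>y\<bar>) \<longlongrightarrow> 0) (at 0 within {0..1})"
        by (rule tendsto_eq_intros) (auto intro!: tendsto_eq_intros)
    qed
    then show ?thesis using True by (simp add: continuous_within)
  next
    case False
    then have x_pos: "x > 0" using x by simp
    have "continuous_on {0<..1} (\<lambda>y. y * H (- ln y))"
      by (intro continuous_intros continuous_on_compose2[OF cont]) auto
    then have "continuous_on {0<..1} ?\<phi>"
      by (rule continuous_on_cong[THEN iffD1, OF refl, rotated]) simp
    then have "continuous (at x within {0<..1}) ?\<phi>"
      using x x_pos by (simp add: continuous_on_eq_continuous_within)
    moreover have "at x within {0..1} = at x within {0<..1}"
      by (rule at_within_nhd[of x "{0<..}"]) (use x_pos in auto)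
    ultimately show ?thesis by simp
  qed
qed

lemma tendsto_integral_exp_polynomial:
  fixes H P :: "real \<Rightarrow> real"
  assumes cont: "continuous_on {0..} H" and P: "polynomial_function P"
    and moments: "\<And>k::nat. ((\<lambda>T. integral {0..T} (\<lambda>t. exp (- (1 + real k) * t) * H t)) \<longlongrightarrow> 0) at_top"
  shows "((\<lambda>T. integral {0..T} (\<lambda>t. exp (- t) * H t * P (exp (- t)))) \<longlongrightarrow> 0) at_top"
proof -
  obtain c N where P_eq: "P = (\<lambda>x. \<Sum>i\<le>N. c i * x ^ i)"
    using P unfolding real_polynomial_function_eq[symmetric] real_polynomial_function_iff_sum by blast
  have "exp (- t) * H t * P (exp (- t)) = (\<Sum>i\<le>N. c i * (exp (- (1 + real i) * t) * H t))" for t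
  proof -
    have "exp (- (1 + real i) * t) = exp (- t) * exp (- t) ^ i" for i
      by (simp add: exp_of_nat_mult[symmetric] exp_add[symmetric] algebra_simps)
    then show ?thesis unfolding P_eq by (simp add: sum_distrib_left algebra_simps)
  qed
  moreover have "(\<lambda>t. c i * (exp (- (1 + real i) * t) * H t)) integrable_on {0..T}" for i T
    by (intro integrable_continuous_interval continuous_intros continuous_on_subset[OF cont]) auto
  ultimately have "integral {0..T} (\<lambda>t. exp (- t) * H t * P (exp (- t))) =
      (\<Sum>i\<le>N. c i * integral {0..T} (\<lambda>t. exp (- (1 + real i) * t) * H t))" for T
    by (simp add: integral_sum)
  moreover have "((\<lambda>T. \<Sum>i\<le>N. c i * integral {0..T} (\<lambda>t. exp (- (1 + real i) * t) * H t))
      \<longlongrightarrow> (\<Sum>i\<le>N. c i * 0)) at_top"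
    by (intro tendsto_sum tendsto_mult tendsto_const moments)
  ultimately show ?thesis by simp
qed

lemma integral_exp_minus_le_1: "integral {0..T} (\<lambda>t::real. exp (- t)) \<le> 1"
proof -
  have int: "((\<lambda>t::real. exp (- t)) has_integral 1) {0..}"
    using has_integral_exp_minus_to_infinity[of 1 0] by simp
  then have "integral {0..T} (\<lambda>t::real. exp (- t)) \<le> integral {0..} (\<lambda>t::real. exp (- t))"
    by (intro integral_subset_le integrable_continuous_interval continuous_intros)
       (auto simp: integrable_on_def)
  then show ?thesis using int by (simp add: integral_unique)
qed

lemma integral_exp_square_le_approx:
  fixes H P :: "real \<Rightarrow> real"
  assumes H: "continuous_on {0..T} H" "\<And>t. t \<in> {0..T} \<Longrightarrow> \<bar>H t\<bar> \<le> B"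
    and P: "continuous_on {0..1} P"
    and approx: "\<And>t. t \<in> {0..T} \<Longrightarrow> \<bar>exp (- t) * H t - P (exp (- t))\<bar> \<le> e"
    and T: "T \<ge> 0"
  shows "integral {0..T} (\<lambda>t. (exp (- t) * H t)\<^sup>2)
           \<le> \<bar>integral {0..T} (\<lambda>t. exp (- t) * H t * P (exp (- t)))\<bar> + B * e"
proof -
  have B: "B \<ge> 0" and e: "e \<ge> 0" using H(2)[of 0] approx[of 0] T by auto
  have "continuous_on {0..T} (\<lambda>t::real. exp (- t))" by (intro continuous_intros)
  moreover have "(\<lambda>t::real. exp (- t)) ` {0..T} \<subseteq> {0..1}" by auto
  ultimately have P_exp: "continuous_on {0..T} (\<lambda>t. P (exp (- t)))"
    by (rule continuous_on_compose2[OF P])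
  have q: "continuous_on {0..T} (\<lambda>t. exp (- t) * H t)" by (intro continuous_intros H(1))
  define D where "D t = exp (- t) * H t * (exp (- t) * H t - P (exp (- t)))" for t
  have J_int: "(\<lambda>t. exp (- t) * H t * P (exp (- t))) integrable_on {0..T}"
    by (intro integrable_continuous_interval continuous_on_mult q P_exp)
  have D_int: "D integrable_on {0..T}"
    unfolding D_def by (intro integrable_continuous_interval continuous_on_mult continuous_on_diff q P_exp)
  have "(\<lambda>t. (exp (- t) * H t)\<^sup>2) = (\<lambda>t. exp (- t) * H t * P (exp (- t)) + D t)"
    by (auto simp: D_def power2_eq_square algebra_simps)
  then have "integral {0..T} (\<lambda>t. (exp (- t) * H t)\<^sup>2)
      = integral {0..T} (\<lambda>t. exp (- t) * H t * P (exp (- t))) + integral {0..T} D"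
    by (simp add: integral_add[OF J_int D_int])
  also have "integral {0..T} D \<le> integral {0..T} (\<lambda>t. B * e * exp (- t))"
  proof (rule integral_le[OF _ _ order_trans[OF abs_ge_self]])
    show "D integrable_on {0..T}" by (rule D_int)
    show "(\<lambda>t. B * e * exp (- t)) integrable_on {0..T}"
      by (intro integrable_continuous_interval continuous_on_mult continuous_on_const continuous_on_exp continuous_on_minus continuous_on_id)
    fix t assume t: "t \<in> {0..T}"
    have "\<bar>H t\<bar> * \<bar>exp (- t) * H t - P (exp (- t))\<bar> \<le> B * e"
      using H(2)[OF t] approx[OF t] by (intro mult_mono) auto
    then show "\<bar>D t\<bar> \<le> B * e * exp (- t)"
      unfolding D_def by (simp add: abs_mult mult_left_mono mult.commute mult.left_commute)
  qed
  also have "\<dots> = B * e * integral {0..T} (\<lambda>t. exp (- t))" by simp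
  also have "\<dots> \<le> B * e" using B e integral_exp_minus_le_1[of T] by (simp add: mult_left_le)
  finally show ?thesis by linarith
qed

lemma integral_exp_square_le_epsilon:
  fixes H :: "real \<Rightarrow> real"
  assumes cont: "continuous_on {0..} H" and bnd: "\<And>t. t \<ge> 0 \<Longrightarrow> \<bar>H t\<bar> \<le> B"
    and moments: "\<And>k::nat. ((\<lambda>T. integral {0..T} (\<lambda>t. exp (- (1 + real k) * t) * H t)) \<longlongrightarrow> 0) at_top"
    and T0: "T0 \<ge> 0" and e: "e > 0"
  shows "integral {0..T0} (\<lambda>t. (exp (- t) * H t)\<^sup>2) \<le> (1 + B) * e"
proof -
  \<comment> \<open>Since phi (exp (-t)) = exp (-t) * H t, replacing phi by a polynomial P turns the integral of
    (exp (-t) * H t)^2 into a combination of the vanishing moments, up to an error B e.\<close>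
  define \<phi> where "\<phi> x = (if x \<le> 0 then 0 else x * H (- ln x))" for x :: real
  have "continuous_on {0..1} \<phi>"
    unfolding \<phi>_def by (rule continuous_on_exp_substitution[OF cont bnd])
  from Stone_Weierstrass_polynomial_function[OF compact_Icc this e]
  obtain P where P: "polynomial_function P" "\<And>x. x \<in> {0..1} \<Longrightarrow> \<bar>\<phi> x - P x\<bar> < e"
    by auto
  define J where "J T = integral {0..T} (\<lambda>t. exp (- t) * H t * P (exp (- t)))" for T
  have "(J \<longlongrightarrow> 0) at_top"
    unfolding J_def by (rule tendsto_integral_exp_polynomial[OF cont P(1) moments])
  from tendstoD[OF this e] have "\<forall>\<^sub>F T in at_top. \<bar>J T\<bar> < e" by (simp add: dist_real_def)
  then have "\<forall>\<^sub>F T in at_top. T \<ge> T0 \<and> \<bar>J T\<bar> < e"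
    by (rule eventually_conj[OF eventually_ge_at_top])
  then obtain T where T: "T \<ge> T0" "\<bar>J T\<bar> < e"
    using eventually_happens'[OF trivial_limit_at_top_linorder] by blast
  have "continuous_on {0..T} (\<lambda>t. (exp (- t) * H t)\<^sup>2)"
    by (intro continuous_intros continuous_on_subset[OF cont]) auto
  then have "integral {0..T0} (\<lambda>t. (exp (- t) * H t)\<^sup>2) \<le> integral {0..T} (\<lambda>t. (exp (- t) * H t)\<^sup>2)"
    using T T0 by (intro integral_subset_le integrable_continuous_interval)
      (auto intro: continuous_on_subset)
  also have "\<dots> \<le> \<bar>J T\<bar> + B * e"
    unfolding J_def
  proof (rule integral_exp_square_le_approx)
    show "continuous_on {0..T} H" by (rule continuous_on_subset[OF cont]) auto
    show "continuous_on {0..1} P" by (rule continuous_on_polymonial_function[OF P(1)])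
    show "\<bar>exp (- t) * H t - P (exp (- t))\<bar> \<le> e" if "t \<in> {0..T}" for t
      using P(2)[of "exp (- t)"] that by (simp add: \<phi>_def)
  qed (use bnd T T0 in auto)
  also have "\<dots> \<le> (1 + B) * e" using T by (simp add: algebra_simps)
  finally show ?thesis .
qed

lemma exp_moments_zero_imp_zero:
  fixes H :: "real \<Rightarrow> real"
  assumes cont: "continuous_on {0..} H" and bnd: "\<And>t. t \<ge> 0 \<Longrightarrow> \<bar>H t\<bar> \<le> B"
    and moments: "\<And>k::nat. ((\<lambda>T. integral {0..T} (\<lambda>t. exp (- (1 + real k) * t) * H t)) \<longlongrightarrow> 0) at_top"
    and t0: "t0 \<ge> 0"
  shows "H t0 = 0"
proof -
  define q where "q = (\<lambda>t. (exp (- t) * H t)\<^sup>2)"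
  have q_cont: "continuous_on {0..t0 + 1} q"
    unfolding q_def by (intro continuous_intros continuous_on_subset[OF cont]) auto
  have B: "B \<ge> 0" using bnd[of 0] by simp
  have "integral {0..t0 + 1} q \<le> 0"
  proof (rule field_le_epsilon)
    fix e :: real assume "e > 0"
    then show "integral {0..t0 + 1} q \<le> 0 + e"
      using integral_exp_square_le_epsilon[OF cont bnd moments, of "t0 + 1" "e / (1 + B)"] t0 B
      by (simp add: q_def)
  qed
  moreover have "integral {0..t0 + 1} q \<ge> 0"
    using q_cont by (intro integral_nonneg integrable_continuous_interval) (auto simp: q_def)
  ultimately have "(q has_integral 0) (cbox 0 (t0 + 1))"
    using integrable_continuous_interval[OF q_cont] by (simp add: has_integral_iff)
  then have "q t0 = 0"
    using q_cont t0 by (intro has_integral_0_cbox_imp_0[of 0 "t0 + 1" q]) (auto simp: q_def)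
  then show ?thesis by (simp add: q_def)
qed

lemma laplace_transform_zero_imp_zero:
  fixes g :: "real \<Rightarrow> real"
  assumes cont: "continuous_on {0<..} g"
    and laplace: "\<forall>\<^sub>F s in at_top. ((\<lambda>t. exp (- s * t) * g t) has_integral 0) {0<..}"
    and t: "t > 0"
  shows "g t = 0"
proof -
  obtain S where S: "\<And>s. s \<ge> S \<Longrightarrow> ((\<lambda>t. exp (- s * t) * g t) has_integral 0) {0..}"
    using laplace unfolding eventually_at_top_linorder has_integral_Ioi_iff_Ici by blast
  \<comment> \<open>The primitive H of k is bounded, and by parts its transform at 1 + j is that of g at
    S + 1 + j divided by 1 + j, hence zero.\<close>
  define k where "k t = exp (- S * t) * g t" for t
  define H where "H T = integral {0..T} k" for T
  have k_int: "(k has_integral 0) {0..}" unfolding k_def using S by simp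
  have k_sub: "k integrable_on {0..T}" for T
    using k_int by (intro integrable_on_subinterval[of _ "{0..}"]) (auto simp: integrable_on_def)
  have k_cont: "continuous_on {0<..} k" unfolding k_def by (intro continuous_intros cont)
  have H_cont: "continuous_on {0..} H" unfolding H_def by (rule continuous_on_primitive_Ici[OF k_sub])
  obtain B where B: "\<And>t. t \<ge> 0 \<Longrightarrow> \<bar>H t\<bar> \<le> B"
    using bounded_Ici_if_tendsto_at_top[OF H_cont tendsto_integral_Icc_at_top[OF k_int, folded H_def]] by blast
  have moments: "((\<lambda>T. integral {0..T} (\<lambda>t. exp (- (1 + real j) * t) * H t)) \<longlongrightarrow> 0) at_top"
    for j :: nat
  proof -
    have "((\<lambda>t. exp (- (1 + real j) * t) * k t) has_integral 0) {0..}"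
      using S[of "S + (1 + real j)"] by (simp add: k_def exp_add[symmetric] algebra_simps)
    from tendsto_laplace_primitive[OF k_int k_cont this] show ?thesis unfolding H_def by simp
  qed
  have H0: "H x = 0" if "x \<ge> 0" for x by (rule exp_moments_zero_imp_zero[OF H_cont B moments that])
  have "(H has_vector_derivative k t) (at t)"
    unfolding H_def using t k_cont
    by (intro primitive_has_vector_derivative[OF k_sub, of t "t + 1"]) (auto simp: continuous_on_eq_continuous_at)
  then have "((\<lambda>_. 0) has_vector_derivative k t) (at t)"
    by (rule has_vector_derivative_transform_within_open[of _ _ _ "{0<..}"]) (use t H0 in auto)
  then have "k t = 0" using vector_derivative_unique_at[OF _ has_vector_derivative_const] by blast
  then show ?thesis by (simp add: k_def)
qed

lemma laplace_transform_zero_imp_zero_complex: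
  fixes g :: "real \<Rightarrow> complex"
  assumes cont: "continuous_on {0<..} g"
    and laplace: "\<forall>\<^sub>F s in at_top. ((\<lambda>t. of_real (exp (- s * t)) * g t) has_integral 0) {0<..}"
    and t: "t > 0"
  shows "g t = 0"
proof (rule complex_eqI)
  have "\<forall>\<^sub>F s in at_top. ((\<lambda>t. exp (- s * t) * Re (g t)) has_integral 0) {0<..}"
    by (rule eventually_mono[OF laplace]) (drule has_integral_Re, simp)
  from laplace_transform_zero_imp_zero[OF continuous_on_Re[OF cont] this t]
  show "Re (g t) = Re 0" by simp
  have "\<forall>\<^sub>F s in at_top. ((\<lambda>t. exp (- s * t) * Im (g t)) has_integral 0) {0<..}"
    by (rule eventually_mono[OF laplace]) (drule has_integral_Im, simp)
  from laplace_transform_zero_imp_zero[OF continuous_on_Im[OF cont] this t]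
  show "Im (g t) = Im 0" by simp
qed

section \<open>The relaxation modulus of the Andrade model\<close>

lemma eventually_powr_gt_at_top:
  fixes \<beta> \<tau> c :: real
  assumes \<beta>: "\<beta> > 0" and \<tau>: "\<tau> > 0"
  shows "\<forall>\<^sub>F s in at_top. c < (s * \<tau>) powr \<beta>"
proof (rule eventually_mono[OF eventually_gt_at_top[of "(\<bar>c\<bar> + 1) powr (1 / \<beta>) / \<tau>"]])
  fix s assume "(\<bar>c\<bar> + 1) powr (1 / \<beta>) / \<tau> < s"
  then have "(\<bar>c\<bar> + 1) powr (1 / \<beta>) < s * \<tau>" using \<tau> by (simp add: field_simps)
  then have "((\<bar>c\<bar> + 1) powr (1 / \<beta>)) powr \<beta> < (s * \<tau>) powr \<beta>"
    using \<beta> by (intro powr_less_mono2) auto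
  then show "c < (s * \<tau>) powr \<beta>" using \<beta> by (simp add: powr_powr)
qed

lemma continuous_on_rabotnov:
  assumes "\<nu> > -1"
  shows "continuous_on {0<..} (rabotnov \<nu> lam)"
proof -
  have "continuous_on UNIV (mittag_leffler (\<nu> + 1) (\<nu> + 1))"
    using isCont_mittag_leffler assms by (intro continuous_at_imp_continuous_on) auto
  moreover have "continuous_on {0<..} (\<lambda>t. lam * of_real (t powr (\<nu> + 1)))"
    by (intro continuous_intros) auto
  ultimately have "continuous_on {0<..} (\<lambda>t. mittag_leffler (\<nu> + 1) (\<nu> + 1) (lam * of_real (t powr (\<nu> + 1))))"
    by (rule continuous_on_compose2) auto
  then show ?thesis
    unfolding rabotnov_def[abs_def] by (intro continuous_intros) auto
qed

lemma has_integral_laplace_partial_fractions: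
  fixes p :: "complex poly" and R :: "complex set" and \<beta> \<tau> s :: real
  assumes card: "card R = degree p" and deg: "degree p > 0"
    and roots: "\<And>x. x \<in> R \<Longrightarrow> poly p x = 0"
    and \<beta>: "\<beta> > 0" and \<tau>: "\<tau> > 0" and s: "s > 0"
    and small: "\<And>x. x \<in> R \<Longrightarrow> norm x < (s * \<tau>) powr \<beta>"
  shows "((\<lambda>t. of_real (exp (- s * t)) * (\<Sum>x\<in>R. rabotnov (\<beta> - 1) x (t / \<tau>) / poly (pderiv p) x))
           has_integral of_real \<tau> / poly p (of_real ((s * \<tau>) powr \<beta>))) {0<..}"
proof -
  define w :: complex where "w = of_real ((s * \<tau>) powr \<beta>)"
  have "finite R" using card deg by (simp add: card_ge_0_finite)
  then have integral: "((\<lambda>t. \<Sum>x\<in>R. of_real (exp (- s * t)) * rabotnov (\<beta> - 1) x (t / \<tau>) / poly (pderiv p) x)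
      has_integral (\<Sum>x\<in>R. of_real \<tau> / (w - x) / poly (pderiv p) x)) {0<..}"
    unfolding w_def
    by (intro has_integral_sum has_integral_divide has_integral_laplace_rabotnov \<beta> \<tau> s small)
  have "w \<notin> R" using small s \<tau> by (force simp: w_def)
  have "(\<Sum>x\<in>R. of_real \<tau> / (w - x) / poly (pderiv p) x)
      = of_real \<tau> * (\<Sum>x\<in>R. 1 / (poly (pderiv p) x * (w - x)))"
    by (simp add: sum_distrib_left mult.commute)
  also have "\<dots> = of_real \<tau> / poly p w"
    using partial_fractions_simple_roots[OF card deg roots \<open>w \<notin> R\<close>] by simp
  finally show ?thesis using integral by (simp add: w_def sum_distrib_left)
qed

lemma degree_p_nm:
  assumes "0 < m" "m < n"
  shows "degree (p_nm n m) = n"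
proof -
  have coeff: "coeff (p_nm n m) i = (if i = n then 1 else 0)
      + (if i = n - m then of_real (Gamma (1 + real m / real n)) else 0) + (if i = 0 then 1 else 0)" for i
    by (simp add: p_nm_def)
  have "degree (p_nm n m) \<le> n" by (rule degree_le) (use assms in \<open>auto simp: coeff\<close>)
  moreover have "coeff (p_nm n m) n \<noteq> 0" using assms by (simp add: coeff)
  ultimately show ?thesis by (simp add: le_antisym le_degree)
qed

lemma poly_p_nm_of_real_powr:
  fixes x :: real
  assumes "x > 0" "m < n"
  shows "poly (p_nm n m) (of_real (x powr (1 / real n)))
           = of_real (x + Gamma (1 + real m / real n) * x powr (1 - real m / real n) + 1)"
proof -
  have "(x powr (1 / real n)) ^ k = x powr (real k / real n)" for k
    using assms by (simp add: powr_realpow[symmetric] powr_powr)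
  moreover have "real (n - m) / real n = 1 - real m / real n" using assms by (simp add: field_simps)
  ultimately show ?thesis
    using assms by (simp add: p_nm_def poly_monom flip: of_real_power)
qed

lemma has_integral_laplace_andrade:
  fixes \<tau> :: real and m n :: nat and r :: "nat \<Rightarrow> complex"
  assumes \<tau>: "\<tau> > 0" and m: "0 < m" "m < n"
    and roots: "\<And>k. k \<in> {1..n} \<Longrightarrow> poly (p_nm n m) (r k) = 0" and distinct: "inj_on r {1..n}"
  shows "\<forall>\<^sub>F s in at_top.
    ((\<lambda>t. of_real (exp (- s * t)) *
        (\<Sum>k=1..n. rabotnov (1 / real n - 1) (r k) (t / \<tau>) / poly (pderiv (p_nm n m)) (r k)))
      has_integral of_real (\<tau> / (s * \<tau> + Gamma (1 + real m / real n) * (s * \<tau>) powr (1 - real m / real n) + 1)))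
    {0<..}"
proof -
  define R where "R = r ` {1..n}"
  have card: "card R = degree (p_nm n m)" using distinct m by (simp add: R_def card_image degree_p_nm)
  have deg: "degree (p_nm n m) > 0" using m by (simp add: degree_p_nm)
  have sum_R: "(\<Sum>x\<in>R. f x) = (\<Sum>k=1..n. f (r k))" for f :: "complex \<Rightarrow> complex"
    unfolding R_def by (rule sum.reindex[OF distinct, unfolded comp_def])
  have "\<forall>\<^sub>F s in at_top. s > 0 \<and> (\<forall>x\<in>R. norm x < (s * \<tau>) powr (1 / real n))"
    using m \<tau> by (intro eventually_conj eventually_gt_at_top eventually_ball_finite ballI eventually_powr_gt_at_top)
       (auto simp: R_def)
  then show ?thesis
  proof (rule eventually_mono, elim conjE)
    fix s :: real assume s: "s > 0" and small: "\<forall>x\<in>R. norm x < (s * \<tau>) powr (1 / real n)"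
    have R_roots: "\<And>x. x \<in> R \<Longrightarrow> poly (p_nm n m) x = 0" using roots by (auto simp: R_def)
    have "((\<lambda>t. of_real (exp (- s * t)) *
        (\<Sum>x\<in>R. rabotnov (1 / real n - 1) x (t / \<tau>) / poly (pderiv (p_nm n m)) x))
      has_integral of_real \<tau> / poly (p_nm n m) (of_real ((s * \<tau>) powr (1 / real n)))) {0<..}"
      by (rule has_integral_laplace_partial_fractions[OF card deg R_roots _ \<tau> s]) (use m small in auto)
    then show "((\<lambda>t. of_real (exp (- s * t)) *
        (\<Sum>k=1..n. rabotnov (1 / real n - 1) (r k) (t / \<tau>) / poly (pderiv (p_nm n m)) (r k)))
      has_integral of_real (\<tau> / (s * \<tau> + Gamma (1 + real m / real n) * (s * \<tau>) powr (1 - real m / real n) + 1)))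
      {0<..}"
      using s \<tau> m by (simp add: sum_R poly_p_nm_of_real_powr)
  qed
qed

theorem mainTheorem1:
  fixes \<mu> \<tau> :: real and m n :: nat and G :: "real \<Rightarrow> real" and r :: "nat \<Rightarrow> complex"
  assumes "\<mu> > 0" and "\<tau> > 0" and "0 < m" and "m < n"
    and G_cont: "continuous_on {0<..} G"
    and G_laplace: "\<And>s::real. s > 0 \<Longrightarrow>
       ((\<lambda>t. exp (- s * t) * G t) has_integral
          (\<mu> * \<tau> / (s * \<tau> + Gamma (1 + real m / real n) * (s * \<tau>) powr (1 - real m / real n) + 1)))
        {0<..}"
    and roots: "\<And>k. k \<in> {1..n} \<Longrightarrow> poly (p_nm n m) (r k) = 0"
    and distinct: "inj_on r {1..n}"
  shows "\<forall>t>0.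
      complex_of_real (G t) =
        complex_of_real (\<mu> * (t / \<tau>) powr (1 / real n - 1)) *
        (\<Sum>k=1..n. mittag_leffler (1 / real n) (1 / real n)
                      (r k * complex_of_real ((t / \<tau>) powr (1 / real n)))
                   / poly (pderiv (p_nm n m)) (r k))
    \<and> complex_of_real (G t) =
        complex_of_real \<mu> *
        (\<Sum>k=1..n. rabotnov (1 / real n - 1) (r k) (t / \<tau>) / poly (pderiv (p_nm n m)) (r k))"
proof -
  define \<Phi> where "\<Phi> t =
    (\<Sum>k=1..n. rabotnov (1 / real n - 1) (r k) (t / \<tau>) / poly (pderiv (p_nm n m)) (r k))" for t
  define D where "D s = s * \<tau> + Gamma (1 + real m / real n) * (s * \<tau>) powr (1 - real m / real n) + 1" for s
  have "continuous_on {0<..} (\<lambda>t. rabotnov (1 / real n - 1) (r k) (t / \<tau>))" for k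
    using \<open>\<tau> > 0\<close> \<open>m < n\<close>
    by (intro continuous_on_compose2[OF continuous_on_rabotnov] continuous_intros) auto
  then have "continuous_on {0<..} (\<lambda>t. complex_of_real (G t) - of_real \<mu> * \<Phi> t)"
    unfolding \<Phi>_def divide_inverse by (intro continuous_intros continuous_on_of_real G_cont)
  moreover have "\<forall>\<^sub>F s in at_top. ((\<lambda>t. of_real (exp (- s * t)) * \<Phi> t) has_integral of_real (\<tau> / D s)) {0<..}"
    unfolding \<Phi>_def D_def
    by (rule has_integral_laplace_andrade) (use \<open>\<tau> > 0\<close> \<open>0 < m\<close> \<open>m < n\<close> roots distinct in auto)
  then have "\<forall>\<^sub>F s in at_top.
      ((\<lambda>t. of_real (exp (- s * t)) * (complex_of_real (G t) - of_real \<mu> * \<Phi> t)) has_integral 0) {0<..}"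
    using eventually_gt_at_top[of 0]
  proof eventually_elim
    case (elim s)
    from has_integral_diff[OF has_integral_of_real[OF G_laplace[OF elim(2)]]
        has_integral_mult_right[OF elim(1), of "of_real \<mu>"]]
    show ?case by (simp add: D_def algebra_simps)
  qed
  ultimately have "complex_of_real (G t) - of_real \<mu> * \<Phi> t = 0" if "t > 0" for t
    using that by (rule laplace_transform_zero_imp_zero_complex)
  then show ?thesis by (simp add: \<Phi>_def rabotnov_def sum_distrib_left mult_ac)
qed

end
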